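(* Let $\pi$ and $\sigma$ be formal Poisson deformations of $\pi_0$ and $\sigma_0$, and assume $H^1_{\mathrm{CE,der}}(\mathcal{A},\mathcal{B})=\{0\}$. If $X,\overline{X}\in\lambda\mathrm{Der}(\mathcal{B})[[\lambda]]$ are such that both $\exp(X)\phi_0$ and $\exp(\overline{X})\phi_0$ are Poisson morphisms $(\mathcal{A}[[\lambda]],\pi)\to(\mathcal{B}[[\lambda]],\sigma)$, then $\exp(\overline{X})=\exp(X_H)\exp(X)\exp(V)$ for some vertical derivation $V\in\lambda\mathrm{Der}(\mathcal{B})[[\lambda]]$ (i.e. $V\circ\phi_0=0$) and $X_H=\sigma(H,\cdot)$ with $H\in\lambda\mathcal{B}[[\lambda]]$. In particular, any two such solutions are equivalent.
   Context: $\mathbb{K}$ is a field of characteristic zero. $\mathcal{A},\mathcal{B}$ are commutative $\mathbb{K}$-algebras with Poisson brackets $\pi_0=\{\cdot,\cdot\}_{\mathcal{A}}$, $\sigma_0=\{\cdot,\cdot\}_{\mathcal{B}}$, and $\phi_0:\mathcal{A}\to\mathcal{B}$ a Poisson morphism. A formal Poisson deformation of $\pi_0$ is a $\mathbb{K}[[\lambda]]$-bilinear Poisson bracket on $\mathcal{A}[[\lambda]]$ with zeroth-order term $\pi_0$. For $X\in\lambda\mathrm{Der}(\mathcal{B})[[\lambda]]$, $\exp(X)=\sum_nX^n/n!$; maps are extended $\lambda$-linearly. Two solutions $X,\overline{X}$ (derivations with $\exp(\cdot)\phi_0$ a Poisson morphism) are called equivalent if $\exp(\overline{X})=\exp(Y)\exp(X)\exp(V)$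 with $Y,V\in\lambda\mathrm{Der}(\mathcal{B})[[\lambda]]$, $V$ vertical and $Y$ a derivation of the bracket $\sigma$. Chevalley–Eilenberg complex: $C^0_{\mathrm{CE}}(\mathcal{A},\mathcal{B})=\mathcal{B}$, $C^k_{\mathrm{CE}}$ = $k$-linear antisymmetric maps $\mathcal{A}^k\to\mathcal{B}$, $(\delta D)(a_0,\dots,a_k)=\sum_j(-1)^j\{\phi_0(a_j),D(\dots,\widehat{a_j},\dots)\}_{\mathcal{B}}+\sum_{i<j}(-1)^{i+j}D(\{a_i,a_j\}_{\mathcal{A}},\dots,\widehat{a_i},\dots,\widehat{a_j},\dots)$; $C^\bullet_{\mathrm{CE,der}}(\mathcal{A},\mathcal{B})$ is the subcomplex of cochains that are derivations along $\phi_0$ in each argument ($D(\dots,aa',\dots)=\phi_0(a)D(\dots,a',\dots)+D(\dots,a,\dots)\phi_0(a')$), with cohomology $H^\bullet_{\mathrm{CE,der}}(\mathcal{A},\mathcal{B})$. *)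

theory Defs
  imports "HOL-Computational_Algebra.Formal_Power_Series"
begin

text \<open>A commutative K-algebra is modelled as a commutative ring 'a together with its
structure map iota :: 'k => 'a, a unital ring homomorphism from the field K.\<close>

definition alg_struct :: "('k::field \<Rightarrow> 'a::comm_ring_1) \<Rightarrow> bool" where
  "alg_struct \<iota> \<longleftrightarrow> \<iota> 1 = 1 \<and> (\<forall>c d. \<iota> (c + d) = \<iota> c + \<iota> d \<and> \<iota> (c * d) = \<iota> c * \<iota> d)"

definition klinear :: "('k::field \<Rightarrow> 'a::comm_ring_1) \<Rightarrow> ('k \<Rightarrow> 'b::comm_ring_1) \<Rightarrow> ('a \<Rightarrow> 'b) \<Rightarrow> bool" where
  "klinear \<iota>A \<iota>B f \<longleftrightarrow> (\<forall>x y. f (x + y) = f x + f y) \<and> (\<forall>c x. f (\<iota>A c * x) = \<iota>B c * f x)"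

definition kbilinear :: "('k::field \<Rightarrow> 'a::comm_ring_1) \<Rightarrow> ('a \<Rightarrow> 'a \<Rightarrow> 'a) \<Rightarrow> bool" where
  "kbilinear \<iota> p \<longleftrightarrow> (\<forall>x. klinear \<iota> \<iota> (p x)) \<and> (\<forall>y. klinear \<iota> \<iota> (\<lambda>x. p x y))"

definition poisson_axioms :: "('a::comm_ring_1 \<Rightarrow> 'a \<Rightarrow> 'a) \<Rightarrow> bool" where
  "poisson_axioms p \<longleftrightarrow>
     (\<forall>x y. p x y = - p y x) \<and>
     (\<forall>x y z. p x (p y z) + p y (p z x) + p z (p x y) = 0) \<and>
     (\<forall>x y z. p x (y * z) = p x y * z + y * p x z)"

definition poisson_bracket :: "('k::field \<Rightarrow> 'a::comm_ring_1) \<Rightarrow> ('a \<Rightarrow> 'a \<Rightarrow> 'a) \<Rightarrow> bool" where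
  "poisson_bracket \<iota> p \<longleftrightarrow> kbilinear \<iota> p \<and> poisson_axioms p"

definition poisson_morphism ::
  "('k::field \<Rightarrow> 'a::comm_ring_1) \<Rightarrow> ('k \<Rightarrow> 'b::comm_ring_1) \<Rightarrow> ('a \<Rightarrow> 'a \<Rightarrow> 'a) \<Rightarrow> ('b \<Rightarrow> 'b \<Rightarrow> 'b) \<Rightarrow> ('a \<Rightarrow> 'b) \<Rightarrow> bool" where
  "poisson_morphism \<iota>A \<iota>B pA pB \<phi> \<longleftrightarrow> klinear \<iota>A \<iota>B \<phi> \<and> \<phi> 1 = 1 \<and>
     (\<forall>x y. \<phi> (x * y) = \<phi> x * \<phi> y) \<and> (\<forall>x y. \<phi> (pA x y) = pB (\<phi> x) (\<phi> y))"

text \<open>The lambda-bilinear extension of a formal series of bilinear maps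
  p = sum_n lambda^n p_n to A[[lambda]].\<close>
definition ser_bracket :: "(nat \<Rightarrow> 'a::comm_ring_1 \<Rightarrow> 'a \<Rightarrow> 'a) \<Rightarrow> 'a fps \<Rightarrow> 'a fps \<Rightarrow> 'a fps" where
  "ser_bracket p f g = Abs_fps (\<lambda>k. \<Sum>i\<le>k. \<Sum>j\<le>k - i. p i (fps_nth f j) (fps_nth g (k - i - j)))"

definition formal_poisson_deformation ::
  "('k::field \<Rightarrow> 'a::comm_ring_1) \<Rightarrow> ('a \<Rightarrow> 'a \<Rightarrow> 'a) \<Rightarrow> (nat \<Rightarrow> 'a \<Rightarrow> 'a \<Rightarrow> 'a) \<Rightarrow> bool" where
  "formal_poisson_deformation \<iota> p0 p \<longleftrightarrow> p 0 = p0 \<and> (\<forall>n. kbilinear \<iota> (p n)) \<and>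
     poisson_axioms (ser_bracket p)"

definition ser_ext :: "('a \<Rightarrow> 'b) \<Rightarrow> 'a fps \<Rightarrow> 'b fps" where
  "ser_ext \<phi> f = Abs_fps (\<lambda>k. \<phi> (fps_nth f k))"

definition ser_poisson_morphism ::
  "(nat \<Rightarrow> 'a::comm_ring_1 \<Rightarrow> 'a \<Rightarrow> 'a) \<Rightarrow> (nat \<Rightarrow> 'b::comm_ring_1 \<Rightarrow> 'b \<Rightarrow> 'b) \<Rightarrow> ('a fps \<Rightarrow> 'b fps) \<Rightarrow> bool" where
  "ser_poisson_morphism p s F \<longleftrightarrow> (\<forall>f g. F (f + g) = F f + F g) \<and> F 1 = 1 \<and>
     (\<forall>f g. F (f * g) = F f * F g) \<and> (\<forall>f g. F (ser_bracket p f g) = ser_bracket s (F f) (F g))"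

definition is_derivation :: "('k::field \<Rightarrow> 'b::comm_ring_1) \<Rightarrow> ('b \<Rightarrow> 'b) \<Rightarrow> bool" where
  "is_derivation \<iota> D \<longleftrightarrow> klinear \<iota> \<iota> D \<and> (\<forall>x y. D (x * y) = x * D y + D x * y)"

text \<open>Elements of lambda Der(B)[[lambda]]: sequences D_n of derivations with D_0 = 0.\<close>
definition lambda_der :: "('k::field \<Rightarrow> 'b::comm_ring_1) \<Rightarrow> (nat \<Rightarrow> 'b \<Rightarrow> 'b) \<Rightarrow> bool" where
  "lambda_der \<iota> D \<longleftrightarrow> D 0 = (\<lambda>_. 0) \<and> (\<forall>n. is_derivation \<iota> (D n))"

text \<open>Action of sum_n lambda^n D_n on B[[lambda]].\<close>
definition sop_apply :: "(nat \<Rightarrow> 'b::comm_ring_1 \<Rightarrow> 'b) \<Rightarrow> 'b fps \<Rightarrow> 'b fps" where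
  "sop_apply D f = Abs_fps (\<lambda>k. \<Sum>i\<le>k. D i (fps_nth f (k - i)))"

text \<open>exp(D) = sum_n D^n / n!. For D_0 = 0 the operator D^n raises the lambda-order by n,
  so the k-th coefficient only receives contributions from n \<le> k.\<close>
definition sop_exp :: "('k::field_char_0 \<Rightarrow> 'b::comm_ring_1) \<Rightarrow> (nat \<Rightarrow> 'b \<Rightarrow> 'b) \<Rightarrow> 'b fps \<Rightarrow> 'b fps" where
  "sop_exp \<iota> D f = Abs_fps (\<lambda>k. \<Sum>n\<le>k. \<iota> (1 / fact n) * (fps_nth (((sop_apply D) ^^ n) f) k))"

definition vertical :: "('a \<Rightarrow> 'b::zero) \<Rightarrow> (nat \<Rightarrow> 'b \<Rightarrow> 'b) \<Rightarrow> bool" where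
  "vertical \<phi> V \<longleftrightarrow> (\<forall>n a. V n (\<phi> a) = 0)"

text \<open>Hamiltonian series X_H = sigma(H, .), as a series of maps B -> B.\<close>
definition ham_sop :: "(nat \<Rightarrow> 'b::comm_ring_1 \<Rightarrow> 'b \<Rightarrow> 'b) \<Rightarrow> 'b fps \<Rightarrow> nat \<Rightarrow> 'b \<Rightarrow> 'b" where
  "ham_sop s H n b = (\<Sum>i\<le>n. s i (fps_nth H (n - i)) b)"

definition bracket_derivation :: "(nat \<Rightarrow> 'b::comm_ring_1 \<Rightarrow> 'b \<Rightarrow> 'b) \<Rightarrow> (nat \<Rightarrow> 'b \<Rightarrow> 'b) \<Rightarrow> bool" where
  "bracket_derivation s Y \<longleftrightarrow> (\<forall>f g. sop_apply Y (ser_bracket s f g) =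
      ser_bracket s (sop_apply Y f) g + ser_bracket s f (sop_apply Y g))"

definition is_solution ::
  "('k::field_char_0 \<Rightarrow> 'b::comm_ring_1) \<Rightarrow> (nat \<Rightarrow> 'a::comm_ring_1 \<Rightarrow> 'a \<Rightarrow> 'a) \<Rightarrow> (nat \<Rightarrow> 'b \<Rightarrow> 'b \<Rightarrow> 'b)
     \<Rightarrow> ('a \<Rightarrow> 'b) \<Rightarrow> (nat \<Rightarrow> 'b \<Rightarrow> 'b) \<Rightarrow> bool" where
  "is_solution \<iota>B p s \<phi> X \<longleftrightarrow> lambda_der \<iota>B X \<and>
     ser_poisson_morphism p s (sop_exp \<iota>B X \<circ> ser_ext \<phi>)"

definition equivalent_solutions ::
  "('k::field_char_0 \<Rightarrow> 'b::comm_ring_1) \<Rightarrow> (nat \<Rightarrow> 'b \<Rightarrow> 'b \<Rightarrow> 'b) \<Rightarrow> ('a \<Rightarrow> 'b)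
     \<Rightarrow> (nat \<Rightarrow> 'b \<Rightarrow> 'b) \<Rightarrow> (nat \<Rightarrow> 'b \<Rightarrow> 'b) \<Rightarrow> bool" where
  "equivalent_solutions \<iota>B s \<phi> X Xb \<longleftrightarrow> (\<exists>Y V. lambda_der \<iota>B Y \<and> bracket_derivation s Y \<and>
     lambda_der \<iota>B V \<and> vertical \<phi> V \<and>
     sop_exp \<iota>B Xb = sop_exp \<iota>B Y \<circ> sop_exp \<iota>B X \<circ> sop_exp \<iota>B V)"

text \<open>Chevalley-Eilenberg complex in low degrees (with coefficients in B via phi0).\<close>
definition ce_d0 :: "('b \<Rightarrow> 'b \<Rightarrow> 'b) \<Rightarrow> ('a \<Rightarrow> 'b) \<Rightarrow> 'b \<Rightarrow> 'a \<Rightarrow> 'b" where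
  "ce_d0 pB \<phi> b a = pB (\<phi> a) b"

definition ce_d1 :: "('a \<Rightarrow> 'a \<Rightarrow> 'a) \<Rightarrow> ('b::ab_group_add \<Rightarrow> 'b \<Rightarrow> 'b) \<Rightarrow> ('a \<Rightarrow> 'b) \<Rightarrow> ('a \<Rightarrow> 'b) \<Rightarrow> 'a \<Rightarrow> 'a \<Rightarrow> 'b" where
  "ce_d1 pA pB \<phi> D a0 a1 = pB (\<phi> a0) (D a1) - pB (\<phi> a1) (D a0) - D (pA a0 a1)"

definition ce_der_cochain1 :: "('k::field \<Rightarrow> 'a::comm_ring_1) \<Rightarrow> ('k \<Rightarrow> 'b::comm_ring_1) \<Rightarrow> ('a \<Rightarrow> 'b) \<Rightarrow> ('a \<Rightarrow> 'b) \<Rightarrow> bool" where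
  "ce_der_cochain1 \<iota>A \<iota>B \<phi> D \<longleftrightarrow> klinear \<iota>A \<iota>B D \<and> (\<forall>a a'. D (a * a') = \<phi> a * D a' + D a * \<phi> a')"

definition H1_CE_der_trivial ::
  "('k::field \<Rightarrow> 'a::comm_ring_1) \<Rightarrow> ('k \<Rightarrow> 'b::comm_ring_1) \<Rightarrow> ('a \<Rightarrow> 'a \<Rightarrow> 'a) \<Rightarrow> ('b \<Rightarrow> 'b \<Rightarrow> 'b) \<Rightarrow> ('a \<Rightarrow> 'b) \<Rightarrow> bool" where
  "H1_CE_der_trivial \<iota>A \<iota>B pA pB \<phi> \<longleftrightarrow>
     (\<forall>D. ce_der_cochain1 \<iota>A \<iota>B \<phi> D \<and> ce_d1 pA pB \<phi> D = (\<lambda>_ _. 0) \<longrightarrow> (\<exists>b. D = ce_d0 pB \<phi> b))"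

end

(* Compare exp(Xb) with exp(X_H) exp(X) exp(V) order by order in lambda.  All maps of this
   shape are algebra endomorphisms of B[[lambda]] that are the identity modulo higher order, so
   if two of them agree up to order k, their difference at order k + 1 is a derivation R of B
   applied to the constant term.  Both maps are Poisson morphisms on phi0(A): X_H is a derivation
   of sigma by the Jacobi identity, and exp(V) fixes phi0(A) because V is vertical.  Hence
   R o phi0 is a Chevalley-Eilenberg 1-cocycle, so by H^1 = 0 it is sigma0(phi0 -, b).  Replacing
   H by H - lambda^(k+1) b and adding lambda^(k+1) (R + sigma0(b, -)), which is vertical, to V
   makes the maps agree up to order k + 1; the corrections converge lambda-adically. *)

theory Submission
  imports Defs
begin

unbundle fps_syntax

section \<open>Algebraic preliminaries and the lambda-adic filtration\<close>

lemma alg_struct_additive: "alg_struct \<iota> \<Longrightarrow> additive \<iota>"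
  by (simp add: alg_struct_def additive_def)

lemma alg_struct_of_nat: "alg_struct \<iota> \<Longrightarrow> \<iota> (of_nat n) = of_nat n"
  by (induct n) (simp_all add: alg_struct_def additive.zero[OF alg_struct_additive])

lemma alg_struct_fact_binomial:
  fixes \<iota> :: "'k::field_char_0 \<Rightarrow> 'b::comm_ring_1"
  assumes "alg_struct \<iota>" "a \<le> n"
  shows "\<iota> (1 / fact n) * of_nat (n choose a) = \<iota> (1 / fact a) * \<iota> (1 / fact (n - a))"
proof -
  have "(1 / fact n) * (of_nat (n choose a) :: 'k) = (1 / fact a) * (1 / fact (n - a))"
    using binomial_fact[OF assms(2), where 'a='k] by (simp add: field_simps)
  then have "\<iota> ((1 / fact n) * of_nat (n choose a)) = \<iota> ((1 / fact a) * (1 / fact (n - a)))"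
    by (rule arg_cong)
  moreover have "\<iota> (x * y) = \<iota> x * \<iota> y" for x y
    using assms(1) by (simp add: alg_struct_def)
  ultimately show ?thesis
    by (simp only: alg_struct_of_nat[OF assms(1)])
qed

lemma klinear_additive: "klinear \<iota>A \<iota>B f \<Longrightarrow> additive f"
  by (simp add: klinear_def additive_def)

lemma additive_comp: "additive f \<Longrightarrow> additive g \<Longrightarrow> additive (f \<circ> g)"
  by (simp add: additive_def)

lemma additive_funpow:
  fixes f :: "'a::ab_group_add \<Rightarrow> 'a"
  shows "additive f \<Longrightarrow> additive (f ^^ n)"
  by (induct n) (simp_all add: additive_def funpow.simps)

lemma additive_of_nat_mult:
  fixes f :: "'a::comm_ring_1 \<Rightarrow> 'b::comm_ring_1"
  shows "additive f \<Longrightarrow> f (of_nat n * x) = of_nat n * f x"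
  by (induct n) (simp_all add: additive.zero additive.add distrib_right)

definition vanishes_below :: "'a::zero fps \<Rightarrow> nat \<Rightarrow> bool" where
  "vanishes_below f n \<longleftrightarrow> (\<forall>i<n. f $ i = 0)"

lemma vanishes_below_0 [simp]: "vanishes_below f 0"
  and vanishes_below_zero [simp]: "vanishes_below 0 n"
  by (simp_all add: vanishes_below_def)

lemma vanishes_below_mono: "vanishes_below f n \<Longrightarrow> m \<le> n \<Longrightarrow> vanishes_below f m"
  by (simp add: vanishes_below_def)

lemma vanishes_below_add:
  fixes f :: "'a::monoid_add fps"
  shows "vanishes_below f n \<Longrightarrow> vanishes_below g n \<Longrightarrow> vanishes_below (f + g) n"
  by (simp add: vanishes_below_def)

lemma vanishes_below_diff_iff:
  fixes f :: "'a::ab_group_add fps"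
  shows "vanishes_below (f - g) n \<longleftrightarrow> (\<forall>i<n. f $ i = g $ i)"
  by (simp add: vanishes_below_def)

lemma vanishes_below_mult:
  fixes f :: "'a::comm_ring_1 fps"
  assumes "vanishes_below f m" "vanishes_below g n"
  shows "vanishes_below (f * g) (m + n)"
  unfolding vanishes_below_def fps_mult_nth
proof (intro allI impI sum.neutral ballI)
  fix k i assume "k < m + n" "i \<in> {0..k}"
  then show "f $ i * g $ (k - i) = 0"
    using assms by (cases "i < m") (auto simp: vanishes_below_def)
qed

lemma mult_nth_vanishes_below_left:
  fixes f :: "'a::comm_ring_1 fps"
  assumes "vanishes_below f n"
  shows "(f * g) $ n = f $ n * g $ 0"
proof -
  have "(f * g) $ n = (\<Sum>i\<in>{n}. f $ i * g $ (n - i))"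
    unfolding fps_mult_nth
    by (rule sum.mono_neutral_right) (use assms in \<open>auto simp: vanishes_below_def\<close>)
  then show ?thesis by simp
qed

lemma mult_nth_vanishes_below_right:
  fixes f :: "'a::comm_ring_1 fps"
  shows "vanishes_below g n \<Longrightarrow> (f * g) $ n = f $ 0 * g $ n"
  using mult_nth_vanishes_below_left[of g n f] by (simp add: mult.commute)

section \<open>Series of operators and their exponentials\<close>

definition lambda_additive :: "(nat \<Rightarrow> 'b::ab_group_add \<Rightarrow> 'b) \<Rightarrow> bool" where
  "lambda_additive D \<longleftrightarrow> D 0 = (\<lambda>_. 0) \<and> (\<forall>n. additive (D n))"

lemma lambda_der_imp_lambda_additive: "lambda_der \<iota> D \<Longrightarrow> lambda_additive D"
  by (auto simp: lambda_der_def lambda_additive_def is_derivation_def intro: klinear_additive)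

lemma lambda_der_klinear: "lambda_der \<iota> D \<Longrightarrow> klinear \<iota> \<iota> (D n)"
  by (simp add: lambda_der_def is_derivation_def)

lemma is_derivation_add:
  assumes "is_derivation \<iota> d" "is_derivation \<iota> d'"
  shows "is_derivation \<iota> (\<lambda>x. d x + d' x)"
proof -
  have "klinear \<iota> \<iota> (\<lambda>x. d x + d' x)"
    using assms[unfolded is_derivation_def, THEN conjunct1] by (simp add: klinear_def distrib_left add_ac)
  moreover have "\<forall>x y. d (x * y) + d' (x * y) = x * (d y + d' y) + (d x + d' x) * y"
    using assms[unfolded is_derivation_def, THEN conjunct2] by (simp add: distrib_left distrib_right add_ac)
  ultimately show ?thesis
    by (simp add: is_derivation_def)
qed

lemma lambda_der_fun_upd_add:
  assumes "lambda_der \<iota> V" "is_derivation \<iota> d"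
  shows "lambda_der \<iota> (V(Suc k := (\<lambda>x. V (Suc k) x + d x)))"
  using assms is_derivation_add[of \<iota> "V (Suc k)" d] by (simp add: lambda_der_def)


lemma sop_apply_nth: "sop_apply D f $ k = (\<Sum>i\<le>k. D i (f $ (k - i)))"
  by (simp add: sop_apply_def)

lemma sop_apply_additive:
  assumes "lambda_additive D"
  shows "additive (sop_apply D)"
  using assms
  by (simp add: additive_def lambda_additive_def fps_eq_iff sop_apply_nth additive.add sum.distrib)

lemma sop_apply_funpow_additive: "lambda_additive D \<Longrightarrow> additive (sop_apply D ^^ n)"
  by (intro additive_funpow sop_apply_additive)

lemma sop_apply_raises_order:
  assumes "lambda_additive D" "vanishes_below f n"
  shows "vanishes_below (sop_apply D f) (Suc n)"
  unfolding vanishes_below_def sop_apply_nth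
proof (intro allI impI sum.neutral ballI)
  fix k i assume "k < Suc n" "i \<in> {..k}"
  then show "D i (f $ (k - i)) = 0"
    using assms additive.zero
    by (cases i) (auto simp: lambda_additive_def vanishes_below_def)
qed

lemma sop_apply_funpow_raises_order:
  "lambda_additive D \<Longrightarrow> vanishes_below f n \<Longrightarrow> vanishes_below ((sop_apply D ^^ m) f) (n + m)"
  by (induct m) (simp_all add: sop_apply_raises_order)

lemma sop_apply_funpow_vanishes_below:
  "lambda_additive D \<Longrightarrow> vanishes_below ((sop_apply D ^^ m) f) m"
  using sop_apply_funpow_raises_order[of D f 0 m] by simp

lemma sop_apply_fps_X_mult:
  assumes "lambda_additive D"
  shows "sop_apply D (fps_X * f) = fps_X * sop_apply D f"
proof (rule fps_ext)
  fix n
  have D0: "D i 0 = 0" for i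
    using assms by (simp add: lambda_additive_def additive.zero)
  show "sop_apply D (fps_X * f) $ n = (fps_X * sop_apply D f) $ n"
  proof (cases n)
    case 0
    then show ?thesis using assms by (simp add: sop_apply_nth lambda_additive_def)
  next
    case (Suc m)
    then have "sop_apply D (fps_X * f) $ n = (\<Sum>i\<le>m. D i ((fps_X * f) $ (Suc m - i))) + D (Suc m) 0"
      by (simp add: sop_apply_nth)
    also have "\<dots> = (\<Sum>i\<le>m. D i (f $ (m - i)))"
      by (simp add: D0 Suc_diff_le)
    finally show ?thesis using Suc by (simp add: sop_apply_nth)
  qed
qed

lemma sop_apply_const_mult:
  assumes "\<And>n. klinear \<iota> \<iota> (D n)"
  shows "sop_apply D (fps_const (\<iota> c) * f) = fps_const (\<iota> c) * sop_apply D f"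
  using assms by (auto simp: fps_eq_iff sop_apply_nth klinear_def sum_distrib_left)

lemma sop_apply_diff: "sop_apply D' f - sop_apply D f = sop_apply (\<lambda>i x. D' i x - D i x) f"
  by (simp add: fps_eq_iff sop_apply_nth sum_subtractf)

lemma sop_apply_raises_order_by:
  assumes "\<forall>i\<le>k. W i = (\<lambda>_. 0)" "\<forall>n. additive (W n)" "vanishes_below f n"
  shows "vanishes_below (sop_apply W f) (n + Suc k)"
  unfolding vanishes_below_def sop_apply_nth
proof (intro allI impI sum.neutral ballI)
  fix j i assume "j < n + Suc k" "i \<in> {..j}"
  then show "W i (f $ (j - i)) = 0"
    using assms additive.zero
    by (cases "i \<le> k") (auto simp: vanishes_below_def)
qed

lemma funpow_sop_apply_perturb:
  assumes "lambda_additive D" "lambda_additive D'" "\<forall>i\<le>k. D' i = D i"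
  shows "vanishes_below ((sop_apply D' ^^ m) f - (sop_apply D ^^ m) f) (k + m)"
proof (induct m)
  case 0
  then show ?case by simp
next
  case (Suc m)
  define W where "W i x = D' i x - D i x" for i x
  have W: "\<forall>i\<le>k. W i = (\<lambda>_. 0)" "\<forall>n. additive (W n)"
    using assms by (auto simp: W_def lambda_additive_def additive_def)
  have "(sop_apply D' ^^ Suc m) f - (sop_apply D ^^ Suc m) f =
      sop_apply D' ((sop_apply D' ^^ m) f - (sop_apply D ^^ m) f) + sop_apply W ((sop_apply D ^^ m) f)"
    unfolding W_def sop_apply_diff[symmetric] additive.diff[OF sop_apply_additive[OF assms(2)]]
    by simp
  moreover have "vanishes_below (sop_apply D' ((sop_apply D' ^^ m) f - (sop_apply D ^^ m) f)) (k + Suc m)"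
    using sop_apply_raises_order[OF assms(2) Suc] by simp
  moreover have "vanishes_below (sop_apply W ((sop_apply D ^^ m) f)) (k + Suc m)"
    using sop_apply_raises_order_by[OF W sop_apply_funpow_vanishes_below[OF assms(1)], of m f]
    by (simp add: add.commute)
  ultimately show ?case by (simp add: vanishes_below_add)
qed

lemma sop_exp_nth: "sop_exp \<iota> D f $ k = (\<Sum>n\<le>k. \<iota> (1 / fact n) * ((sop_apply D ^^ n) f $ k))"
  by (simp add: sop_exp_def)

lemma sop_exp_nth_truncate:
  assumes "lambda_additive D" "k \<le> N"
  shows "sop_exp \<iota> D f $ k = (\<Sum>n\<le>N. \<iota> (1 / fact n) * ((sop_apply D ^^ n) f $ k))"
  unfolding sop_exp_nth
  by (rule sum.mono_neutral_left)
    (use assms sop_apply_funpow_vanishes_below[OF assms(1)] in \<open>auto simp: vanishes_below_def\<close>)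

lemma sop_exp_nth_eq_plus_higher:
  assumes "alg_struct \<iota>"
  shows "sop_exp \<iota> D f $ k = f $ k + (\<Sum>n<k. \<iota> (1 / fact (Suc n)) * ((sop_apply D ^^ Suc n) f $ k))"
  using assms unfolding sop_exp_nth sum.atMost_shift by (simp add: alg_struct_def)

lemma sop_exp_additive:
  assumes "lambda_additive D"
  shows "additive (sop_exp \<iota> D)"
  using additive.add[OF sop_apply_funpow_additive[OF assms]]
  by (simp add: additive_def fps_eq_iff sop_exp_nth distrib_left sum.distrib)

lemma sop_exp_fps_X_mult:
  assumes "lambda_additive D"
  shows "sop_exp \<iota> D (fps_X * f) = fps_X * sop_exp \<iota> D f"
proof (rule fps_ext)
  fix k
  have pow: "(sop_apply D ^^ n) (fps_X * f) = fps_X * (sop_apply D ^^ n) f" for n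
    by (induct n) (simp_all add: sop_apply_fps_X_mult[OF assms])
  show "sop_exp \<iota> D (fps_X * f) $ k = (fps_X * sop_exp \<iota> D f) $ k"
  proof (cases k)
    case 0
    then show ?thesis by (simp add: sop_exp_nth pow)
  next
    case (Suc m)
    then have "sop_exp \<iota> D (fps_X * f) $ k = (\<Sum>n\<le>Suc m. \<iota> (1 / fact n) * ((sop_apply D ^^ n) f $ m))"
      by (simp add: sop_exp_nth pow)
    also have "\<dots> = sop_exp \<iota> D f $ m"
      by (rule sym, rule sop_exp_nth_truncate[OF assms]) simp
    finally show ?thesis using Suc by simp
  qed
qed

lemma sop_exp_const_mult:
  assumes "\<And>n. klinear \<iota> \<iota> (D n)"
  shows "sop_exp \<iota> D (fps_const (\<iota> c) * f) = fps_const (\<iota> c) * sop_exp \<iota> D f"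
proof -
  have "(sop_apply D ^^ m) (fps_const (\<iota> c) * f) = fps_const (\<iota> c) * (sop_apply D ^^ m) f" for m
    by (induct m) (simp_all add: sop_apply_const_mult[OF assms])
  then show ?thesis
    by (simp add: fps_eq_iff sop_exp_nth sum_distrib_left mult.left_commute)
qed

lemma sop_exp_unipotent:
  assumes "alg_struct \<iota>" "lambda_additive D" "vanishes_below f n"
  shows "vanishes_below (sop_exp \<iota> D f - f) (Suc n)"
  unfolding vanishes_below_def
proof (intro allI impI)
  fix j assume "j < Suc n"
  then have "(sop_apply D ^^ Suc m) f $ j = 0" for m
    using sop_apply_funpow_raises_order[OF assms(2,3), of "Suc m"] by (simp add: vanishes_below_def)
  then show "(sop_exp \<iota> D f - f) $ j = 0"
    by (simp add: sop_exp_nth_eq_plus_higher[OF assms(1)])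
qed

lemma sop_exp_perturb:
  assumes "alg_struct \<iota>" "lambda_additive D" "lambda_additive D'" "\<forall>i\<le>k. D' i = D i"
  shows "\<forall>j\<le>k. sop_exp \<iota> D' f $ j = sop_exp \<iota> D f $ j"
    and "sop_exp \<iota> D' f $ Suc k = sop_exp \<iota> D f $ Suc k + (D' (Suc k) (f $ 0) - D (Suc k) (f $ 0))"
proof -
  have diff: "sop_exp \<iota> D' f $ j - sop_exp \<iota> D f $ j =
     (\<Sum>n<j. \<iota> (1 / fact (Suc n)) * (((sop_apply D' ^^ Suc n) f - (sop_apply D ^^ Suc n) f) $ j))" for j
    by (simp add: sop_exp_nth_eq_plus_higher[OF assms(1)] sum_subtractf algebra_simps)
  show "\<forall>j\<le>k. sop_exp \<iota> D' f $ j = sop_exp \<iota> D f $ j"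
  proof (intro allI impI)
    fix j assume "j \<le> k"
    then have "((sop_apply D' ^^ Suc n) f - (sop_apply D ^^ Suc n) f) $ j = 0" for n
      using funpow_sop_apply_perturb[OF assms(2-4), of "Suc n" f] by (simp add: vanishes_below_def)
    then show "sop_exp \<iota> D' f $ j = sop_exp \<iota> D f $ j"
      using diff[of j] by simp
  qed
  have higher: "((sop_apply D' ^^ Suc (Suc n)) f - (sop_apply D ^^ Suc (Suc n)) f) $ Suc k = 0" for n
    using funpow_sop_apply_perturb[OF assms(2-4), of "Suc (Suc n)" f] by (simp add: vanishes_below_def)
  have "sop_exp \<iota> D' f $ Suc k - sop_exp \<iota> D f $ Suc k =
      \<iota> (1 / fact (Suc 0)) * ((sop_apply D' f - sop_apply D f) $ Suc k)"
    unfolding diff lessThan_Suc_eq_insert_0 using higher by (simp add: sum.reindex)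
  also have "\<dots> = D' (Suc k) (f $ 0) - D (Suc k) (f $ 0)"
    using assms(1,4) by (simp add: alg_struct_def sop_apply_diff sop_apply_nth)
  finally show "sop_exp \<iota> D' f $ Suc k = sop_exp \<iota> D f $ Suc k + (D' (Suc k) (f $ 0) - D (Suc k) (f $ 0))"
    by (simp add: algebra_simps)
qed

section \<open>Exponentials of derivations of bilinear operations\<close>

lemma funpow_derivation_binomial:
  fixes T :: "'a::comm_ring_1 \<Rightarrow> 'a" and m :: "'a \<Rightarrow> 'a \<Rightarrow> 'a"
  assumes T: "additive T" and deriv: "\<And>f g. T (m f g) = m (T f) g + m f (T g)"
  shows "(T ^^ n) (m f g) = (\<Sum>a\<le>n. of_nat (n choose a) * m ((T ^^ a) f) ((T ^^ (n - a)) g))"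
proof (induct n)
  case 0
  then show ?case by simp
next
  case (Suc n)
  define L where "L a b = m ((T ^^ a) f) ((T ^^ b) g)" for a b
  have "(T ^^ Suc n) (m f g) = (\<Sum>a\<le>n. of_nat (n choose a) * T (L a (n - a)))"
    using Suc by (simp add: additive.sum[OF T] additive_of_nat_mult[OF T] L_def)
  also have "\<dots> = (\<Sum>a\<le>n. of_nat (n choose a) * L (Suc a) (n - a))
      + (\<Sum>a\<le>n. of_nat (n choose a) * L a (Suc n - a))"
    by (simp add: L_def deriv distrib_left Suc_diff_le sum.distrib)
  also have "(\<Sum>a\<le>n. of_nat (n choose a) * L a (Suc n - a))
      = (\<Sum>a\<le>Suc n. of_nat (n choose a) * L a (Suc n - a))"
    by (simp add: binomial_eq_0)
  also have "\<dots> = L 0 (Suc n) + (\<Sum>a\<le>n. of_nat (n choose Suc a) * L (Suc a) (n - a))"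
    by (subst sum.atMost_Suc_shift) simp
  also have "(\<Sum>a\<le>n. of_nat (n choose a) * L (Suc a) (n - a)) + \<dots>
      = (\<Sum>a\<le>Suc n. of_nat (Suc n choose a) * L a (Suc n - a))"
    by (subst sum.atMost_Suc_shift) (simp add: distrib_right sum.distrib)
  finally show ?case by (simp add: L_def)
qed

definition filtered_bilinear ::
    "('k::field \<Rightarrow> 'b::comm_ring_1) \<Rightarrow> ('b fps \<Rightarrow> 'b fps \<Rightarrow> 'b fps) \<Rightarrow> bool" where
  "filtered_bilinear \<iota> m \<longleftrightarrow> (\<forall>g. additive (\<lambda>f. m f g)) \<and> (\<forall>f. additive (m f)) \<and>
     (\<forall>c f g. m (fps_const (\<iota> c) * f) g = fps_const (\<iota> c) * m f g) \<and>
     (\<forall>c f g. m f (fps_const (\<iota> c) * g) = fps_const (\<iota> c) * m f g) \<and>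
     (\<forall>f g a b. vanishes_below f a \<longrightarrow> vanishes_below g b \<longrightarrow> vanishes_below (m f g) (a + b))"

lemma filtered_bilinearD:
  assumes "filtered_bilinear \<iota> m"
  shows "additive (\<lambda>f. m f g)" "additive (m f)"
    "m (fps_const (\<iota> c) * f) g = fps_const (\<iota> c) * m f g"
    "m f (fps_const (\<iota> c) * g) = fps_const (\<iota> c) * m f g"
    "vanishes_below f a \<Longrightarrow> vanishes_below g b \<Longrightarrow> vanishes_below (m f g) (a + b)"
  using assms by (simp_all add: filtered_bilinear_def)

lemma filtered_bilinear_diff:
  assumes m: "filtered_bilinear \<iota> m"
  shows "m f g - m f' g' = m (f - f') g + m f' (g - g')"
  using additive.diff[OF filtered_bilinearD(1)[OF m]] additive.diff[OF filtered_bilinearD(2)[OF m]]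
  by simp

lemma filtered_bilinear_nth_local:
  assumes m: "filtered_bilinear \<iota> m"
    and "\<forall>i\<le>k. f $ i = f' $ i" "\<forall>i\<le>k. g $ i = g' $ i"
  shows "m f g $ k = m f' g' $ k"
proof -
  have "m f g - m f' g' = m (f - f') g + m f' (g - g')"
    by (rule filtered_bilinear_diff[OF m])
  moreover have "vanishes_below (f - f') (Suc k)" "vanishes_below (g - g') (Suc k)"
    using assms(2,3) by (auto simp: vanishes_below_diff_iff)
  then have "vanishes_below (m (f - f') g) (Suc k)" "vanishes_below (m f' (g - g')) (Suc k)"
    using filtered_bilinearD(5)[OF m, of "f - f'" "Suc k" g 0]
      filtered_bilinearD(5)[OF m, of f' 0 "g - g'" "Suc k"] by simp_all
  ultimately have "(m f g - m f' g') $ k = 0"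
    by (simp add: vanishes_below_def)
  then show ?thesis
    by simp
qed

lemma filtered_bilinear_funpow_nth_eq_0:
  assumes "lambda_additive D" "filtered_bilinear \<iota> m" "k < a + b"
  shows "m ((sop_apply D ^^ a) f) ((sop_apply D ^^ b) g) $ k = 0"
proof -
  have "vanishes_below (m ((sop_apply D ^^ a) f) ((sop_apply D ^^ b) g)) (a + b)"
    using filtered_bilinearD(5)[OF assms(2)] sop_apply_funpow_vanishes_below[OF assms(1)] by blast
  then show ?thesis
    using assms(3) by (simp add: vanishes_below_def)
qed

lemma filtered_bilinear_sop_exp_nth:
  assumes D: "lambda_additive D" and m: "filtered_bilinear \<iota> m"
  shows "m (sop_exp \<iota> D f) (sop_exp \<iota> D g) $ k = (\<Sum>(a, b)\<in>{(a, b). a + b \<le> k}.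
    \<iota> (1 / fact a) * \<iota> (1 / fact b) * (m ((sop_apply D ^^ a) f) ((sop_apply D ^^ b) g) $ k))"
proof -
  define E where "E h = (\<Sum>a\<le>k. fps_const (\<iota> (1 / fact a)) * (sop_apply D ^^ a) h)" for h
  have E: "\<forall>i\<le>k. sop_exp \<iota> D h $ i = E h $ i" for h
    using sop_exp_nth_truncate[OF D, of _ k \<iota> h] by (simp add: E_def fps_sum_nth)
  have "m (sop_exp \<iota> D f) (sop_exp \<iota> D g) $ k = m (E f) (E g) $ k"
    using E by (intro filtered_bilinear_nth_local[OF m])
  also have "m (E f) (E g) = (\<Sum>a\<le>k. \<Sum>b\<le>k. fps_const (\<iota> (1 / fact a)) *
      (fps_const (\<iota> (1 / fact b)) * m ((sop_apply D ^^ a) f) ((sop_apply D ^^ b) g)))"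
    unfolding E_def additive.sum[OF filtered_bilinearD(1)[OF m]] additive.sum[OF filtered_bilinearD(2)[OF m]]
    by (simp add: filtered_bilinearD(3,4)[OF m], subst sum.swap, simp add: mult.left_commute)
  also have "\<dots> $ k = (\<Sum>(a, b)\<in>{..k} \<times> {..k}.
      \<iota> (1 / fact a) * \<iota> (1 / fact b) * (m ((sop_apply D ^^ a) f) ((sop_apply D ^^ b) g) $ k))"
    by (simp add: fps_sum_nth mult.assoc flip: sum.cartesian_product)
  also have "\<dots> = (\<Sum>(a, b)\<in>{(a, b). a + b \<le> k}.
      \<iota> (1 / fact a) * \<iota> (1 / fact b) * (m ((sop_apply D ^^ a) f) ((sop_apply D ^^ b) g) $ k))"
    by (rule sum.mono_neutral_right) (auto simp: filtered_bilinear_funpow_nth_eq_0[OF D m] intro: ccontr)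
  finally show ?thesis .
qed

lemma sop_exp_derivation_nth:
  fixes \<iota> :: "'k::field_char_0 \<Rightarrow> 'b::comm_ring_1"
  assumes \<iota>: "alg_struct \<iota>" and D: "lambda_additive D" and m: "filtered_bilinear \<iota> m"
    and deriv: "\<And>f g. sop_apply D (m f g) = m (sop_apply D f) g + m f (sop_apply D g)"
  shows "sop_exp \<iota> D (m f g) $ k = (\<Sum>(a, b)\<in>{(a, b). a + b \<le> k}.
    \<iota> (1 / fact a) * \<iota> (1 / fact b) * (m ((sop_apply D ^^ a) f) ((sop_apply D ^^ b) g) $ k))"
proof -
  define G where "G a b = \<iota> (1 / fact a) * \<iota> (1 / fact b) * (m ((sop_apply D ^^ a) f) ((sop_apply D ^^ b) g) $ k)"
    for a b
  have fin: "finite {(a::nat, b::nat). a + b \<le> n}" for n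
    by (rule finite_subset[of _ "{..n} \<times> {..n}"]) auto
  have "sop_exp \<iota> D (m f g) $ k = (\<Sum>n\<le>2 * k. \<iota> (1 / fact n) * ((sop_apply D ^^ n) (m f g) $ k))"
    by (rule sop_exp_nth_truncate[OF D]) simp
  also have "\<dots> = (\<Sum>n\<le>2 * k. \<Sum>a\<le>n. \<iota> (1 / fact n) * of_nat (n choose a) *
      (m ((sop_apply D ^^ a) f) ((sop_apply D ^^ (n - a)) g) $ k))"
    unfolding funpow_derivation_binomial[of "sop_apply D" m, OF sop_apply_additive[OF D] deriv]
    by (simp add: fps_sum_nth sum_distrib_left mult.assoc flip: fps_of_nat)
  also have "\<dots> = (\<Sum>n\<le>2 * k. \<Sum>a\<le>n. G a (n - a))"
    by (intro sum.cong refl) (simp add: G_def alg_struct_fact_binomial[OF \<iota>])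
  also have "\<dots> = (\<Sum>(a, b)\<in>{(a, b). a + b \<le> 2 * k}. G a b)"
    by (rule sum.triangle_reindex_eq[symmetric])
  also have "\<dots> = (\<Sum>(a, b)\<in>{(a, b). a + b \<le> k}. G a b)"
    by (rule sum.mono_neutral_right) (auto simp: G_def filtered_bilinear_funpow_nth_eq_0[OF D m] fin intro: ccontr)
  finally show ?thesis
    by (simp add: G_def)
qed

lemma sop_exp_preserves_filtered_bilinear:
  fixes \<iota> :: "'k::field_char_0 \<Rightarrow> 'b::comm_ring_1"
  assumes "alg_struct \<iota>" "lambda_additive D" "filtered_bilinear \<iota> m"
    and "\<And>f g. sop_apply D (m f g) = m (sop_apply D f) g + m f (sop_apply D g)"
  shows "sop_exp \<iota> D (m f g) = m (sop_exp \<iota> D f) (sop_exp \<iota> D g)"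
  by (rule fps_ext) (simp only: sop_exp_derivation_nth[OF assms] filtered_bilinear_sop_exp_nth[OF assms(2,3)])

lemma filtered_bilinear_times: "filtered_bilinear \<iota> (*)"
  by (simp add: filtered_bilinear_def additive_def algebra_simps vanishes_below_mult)

lemma ser_ext_nth: "ser_ext d f $ k = d (f $ k)"
  by (simp add: ser_ext_def)

lemma ser_ext_derivation:
  assumes "is_derivation \<iota> d"
  shows "ser_ext d (f * g) = ser_ext d f * g + f * ser_ext d g"
proof -
  have "additive d" "d (x * y) = x * d y + d x * y" for x y
    using assms klinear_additive by (auto simp: is_derivation_def)
  then show ?thesis
    by (simp add: fps_eq_iff ser_ext_nth fps_mult_nth additive.sum sum.distrib add.commute)
qed

lemma sop_apply_nth_eq_sum_ser_ext:
  assumes "lambda_additive D" "n \<le> N"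
  shows "sop_apply D f $ n = (\<Sum>i\<le>N. fps_X ^ i * ser_ext (D i) f) $ n"
proof -
  have "(\<Sum>i\<le>N. fps_X ^ i * ser_ext (D i) f) $ n = (\<Sum>i\<le>N. if n < i then 0 else D i (f $ (n - i)))"
    by (simp add: fps_sum_nth) (intro sum.cong refl, simp add: fps_X_power_mult_nth ser_ext_nth)
  also have "\<dots> = (\<Sum>i\<le>n. if n < i then 0 else D i (f $ (n - i)))"
    by (rule sum.mono_neutral_right) (use assms in auto)
  finally show ?thesis by (simp add: sop_apply_nth)
qed

lemma sop_apply_mult:
  assumes "lambda_der \<iota> D"
  shows "sop_apply D (f * g) = sop_apply D f * g + f * sop_apply D g"
proof (rule fps_ext)
  fix n
  define P where "P h = (\<Sum>i\<le>n. fps_X ^ i * ser_ext (D i) h)" for h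
  have P: "\<forall>i\<le>n. sop_apply D h $ i = P h $ i" for h
    using sop_apply_nth_eq_sum_ser_ext[OF lambda_der_imp_lambda_additive[OF assms]] by (simp add: P_def)
  have "ser_ext (D i) (f * g) = ser_ext (D i) f * g + f * ser_ext (D i) g" for i
    using assms by (intro ser_ext_derivation[of \<iota>]) (simp add: lambda_der_def)
  then have "P (f * g) = P f * g + f * P g"
    unfolding P_def by (simp add: sum_distrib_left sum_distrib_right sum.distrib algebra_simps)
  then have "sop_apply D (f * g) $ n = (P f * g) $ n + (f * P g) $ n"
    using P by simp
  also have "(P f * g) $ n = (sop_apply D f * g) $ n"
    using P by (auto intro: filtered_bilinear_nth_local[OF filtered_bilinear_times])
  also have "(f * P g) $ n = (f * sop_apply D g) $ n"
    using P by (auto intro: filtered_bilinear_nth_local[OF filtered_bilinear_times])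
  finally show "sop_apply D (f * g) $ n = (sop_apply D f * g + f * sop_apply D g) $ n"
    by simp
qed

lemma sop_exp_mult:
  assumes "alg_struct \<iota>" "lambda_der \<iota> D"
  shows "sop_exp \<iota> D (f * g) = sop_exp \<iota> D f * sop_exp \<iota> D g"
  by (rule sop_exp_preserves_filtered_bilinear[OF assms(1) lambda_der_imp_lambda_additive[OF assms(2)]
        filtered_bilinear_times sop_apply_mult[OF assms(2)]])

lemma sop_exp_vertical:
  assumes "alg_struct \<iota>" "lambda_additive D" "vertical \<phi> D"
  shows "sop_exp \<iota> D (ser_ext \<phi> f) = ser_ext \<phi> f"
proof -
  have "sop_apply D (ser_ext \<phi> f) = 0"
    using assms(3) by (simp add: fps_eq_iff sop_apply_nth ser_ext_nth vertical_def)
  then have "(sop_apply D ^^ Suc n) (ser_ext \<phi> f) = 0" for n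
    by (induct n) (simp_all add: additive.zero[OF sop_apply_additive[OF assms(2)]])
  then show ?thesis
    by (simp add: fps_eq_iff sop_exp_nth_eq_plus_higher[OF assms(1)] del: funpow.simps)
qed

section \<open>Series brackets and Hamiltonian derivations\<close>

lemma kbilinear_rules:
  assumes "kbilinear \<iota> p"
  shows "p 0 y = 0" "p x 0 = 0" "p (x + x') y = p x y + p x' y" "p x (y + y') = p x y + p x y'"
    "p (x - x') y = p x y - p x' y" "p x (y - y') = p x y - p x y'" "p (- x) y = - p x y"
    "p (\<iota> c * x) y = \<iota> c * p x y" "p x (\<iota> c * y) = \<iota> c * p x y"
proof -
  have "klinear \<iota> \<iota> (\<lambda>x. p x y)" "klinear \<iota> \<iota> (p x)" for x y
    using assms by (simp_all add: kbilinear_def)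
  then have l: "additive (\<lambda>x. p x y)" "additive (p x)" for x y
    by (blast intro: klinear_additive)+
  show "p 0 y = 0" "p x 0 = 0" "p (x + x') y = p x y + p x' y" "p x (y + y') = p x y + p x y'"
    "p (x - x') y = p x y - p x' y" "p x (y - y') = p x y - p x y'" "p (- x) y = - p x y"
    using additive.zero[OF l(1)] additive.zero[OF l(2)] additive.add[OF l(1)] additive.add[OF l(2)]
      additive.diff[OF l(1)] additive.diff[OF l(2)] additive.minus[OF l(1)] by simp_all
  show "p (\<iota> c * x) y = \<iota> c * p x y" "p x (\<iota> c * y) = \<iota> c * p x y"
    using assms by (simp_all add: kbilinear_def klinear_def)
qed

lemma ser_bracket_nth: "ser_bracket s f g $ k = (\<Sum>i\<le>k. \<Sum>j\<le>k - i. s i (f $ j) (g $ (k - i - j)))"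
  by (simp add: ser_bracket_def)

lemma filtered_bilinear_ser_bracket:
  assumes kb: "\<forall>n. kbilinear \<iota> (s n)"
  shows "filtered_bilinear \<iota> (ser_bracket s)"
proof -
  note rules = kbilinear_rules[OF kb[rule_format]]
  have "vanishes_below (ser_bracket s f g) (a + b)"
    if "vanishes_below f a" "vanishes_below g b" for f g a b
    unfolding vanishes_below_def ser_bracket_nth
  proof (intro allI impI sum.neutral ballI)
    fix k i j assume "k < a + b" "i \<in> {..k}" "j \<in> {..k - i}"
    then show "s i (f $ j) (g $ (k - i - j)) = 0"
      using that by (cases "j < a") (auto simp: vanishes_below_def rules)
  qed
  then show ?thesis
    by (simp add: filtered_bilinear_def additive_def fps_eq_iff ser_bracket_nth rules
        sum.distrib sum_distrib_left)
qed

lemma ser_bracket_nth_single_term: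
  assumes "j0 \<le> k"
    and zero: "\<And>i j. i \<le> k \<Longrightarrow> j \<le> k - i \<Longrightarrow> (i, j) \<noteq> (0, j0) \<Longrightarrow> s i (f $ j) (g $ (k - i - j)) = 0"
  shows "ser_bracket s f g $ k = s 0 (f $ j0) (g $ (k - j0))"
proof -
  have "(\<Sum>j\<le>k - i. s i (f $ j) (g $ (k - i - j))) = (if i = 0 then s 0 (f $ j0) (g $ (k - j0)) else 0)"
    if "i \<le> k" for i
  proof (cases "i = 0")
    case True
    have "(\<Sum>j\<le>k. s 0 (f $ j) (g $ (k - j))) = (\<Sum>j\<in>{j0}. s 0 (f $ j) (g $ (k - j)))"
      by (rule sum.mono_neutral_right) (use assms(1) zero[of 0] in auto)
    then show ?thesis using True by simp
  next
    case False
    then show ?thesis using that zero by (simp add: sum.neutral)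
  qed
  then show ?thesis
    by (simp add: ser_bracket_nth)
qed

lemma ser_bracket_nth_vanishes_below_left:
  assumes "\<forall>n. kbilinear \<iota> (s n)" "vanishes_below f k"
  shows "ser_bracket s f g $ k = s 0 (f $ k) (g $ 0)"
  using ser_bracket_nth_single_term[of k k s f g] assms
  by (force simp: vanishes_below_def kbilinear_rules[OF assms(1)[rule_format]])

lemma ser_bracket_nth_vanishes_below_right:
  assumes "\<forall>n. kbilinear \<iota> (s n)" "vanishes_below g k"
  shows "ser_bracket s f g $ k = s 0 (f $ 0) (g $ k)"
  using ser_bracket_nth_single_term[of 0 k s f g] assms
  by (force simp: vanishes_below_def kbilinear_rules[OF assms(1)[rule_format]])

lemma poisson_axiomsD:
  assumes "poisson_axioms p"
  shows "p x y = - p y x" "p x (p y z) + p y (p z x) + p z (p x y) = 0"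
    "p x (y * z) = p x y * z + y * p x z"
  using assms unfolding poisson_axioms_def by blast+

lemma poisson_bracket_is_derivation: "poisson_bracket \<iota> p \<Longrightarrow> is_derivation \<iota> (p h)"
  using poisson_axiomsD(3)[of p h]
  by (simp add: poisson_bracket_def kbilinear_def is_derivation_def add.commute)

lemma sop_apply_ham_sop: "sop_apply (ham_sop s H) f = ser_bracket s H f"
proof (rule fps_ext)
  fix k
  define g where "g i j = s i (H $ j) (f $ (k - (i + j)))" for i j
  have "sop_apply (ham_sop s H) f $ k = (\<Sum>m\<le>k. \<Sum>i\<le>m. g i (m - i))"
    by (simp add: sop_apply_nth ham_sop_def g_def sum_distrib_left)
  also have "\<dots> = (\<Sum>(i, j)\<in>{(i, j). i + j \<le> k}. g i j)"
    by (rule sum.triangle_reindex_eq[symmetric])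
  also have "{(i, j). i + j \<le> k} = Sigma {..k} (\<lambda>i. {..k - i})"
    by auto
  also have "(\<Sum>(i, j)\<in>Sigma {..k} (\<lambda>i. {..k - i}). g i j) = ser_bracket s H f $ k"
    by (simp add: sum.Sigma ser_bracket_nth g_def diff_diff_left)
  finally show "sop_apply (ham_sop s H) f $ k = ser_bracket s H f $ k" .
qed

lemma ham_sop_eq_ser_bracket_const:
  assumes "\<forall>n. kbilinear \<iota> (s n)"
  shows "ham_sop s H n b = ser_bracket s H (fps_const b) $ n"
proof -
  have "ser_bracket s H (fps_const b) $ n = (\<Sum>i\<le>n. \<Sum>j\<le>n - i. if j = n - i then s i (H $ j) b else 0)"
    unfolding ser_bracket_nth
    by (intro sum.cong refl) (auto simp: kbilinear_rules[OF assms[rule_format]])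
  then show ?thesis
    by (simp add: ham_sop_def)
qed

lemma ham_sop_lambda_der:
  assumes "\<forall>n. kbilinear \<iota> (s n)" "poisson_axioms (ser_bracket s)" "H $ 0 = 0"
  shows "lambda_der \<iota> (ham_sop s H)"
  unfolding lambda_der_def is_derivation_def
proof (intro conjI allI)
  note rules = kbilinear_rules[OF assms(1)[rule_format]]
  show "ham_sop s H 0 = (\<lambda>_. 0)"
    using assms(3) by (simp add: ham_sop_def rules fun_eq_iff)
  fix n
  show "klinear \<iota> \<iota> (ham_sop s H n)"
    by (simp add: klinear_def ham_sop_def rules sum.distrib sum_distrib_left)
  fix x y
  have "ser_bracket s H (fps_const x * fps_const y)
      = ser_bracket s H (fps_const x) * fps_const y + fps_const x * ser_bracket s H (fps_const y)"
    by (rule poisson_axiomsD(3)[OF assms(2)])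
  then show "ham_sop s H n (x * y) = x * ham_sop s H n y + ham_sop s H n x * y"
    by (simp add: ham_sop_eq_ser_bracket_const[OF assms(1)] algebra_simps flip: fps_const_mult)
qed

lemma poisson_axioms_inner_derivation:
  assumes "poisson_axioms p" "\<And>f. additive (p f)"
  shows "p h (p f g) = p (p h f) g + p f (p h g)"
proof -
  note antisym = poisson_axiomsD(1)[OF assms(1)]
  have "p h (p f g) + p f (p g h) + p g (p h f) = 0"
    by (rule poisson_axiomsD(2)[OF assms(1)])
  moreover have "p f (p g h) = - p f (p h g)"
    using antisym[of g h] additive.minus[OF assms(2)] by simp
  moreover have "p g (p h f) = - p (p h f) g"
    by (rule antisym)
  ultimately show ?thesis
    by (simp add: add_eq_0_iff2 algebra_simps)
qed

lemma ham_sop_bracket_derivation: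
  assumes "\<forall>n. kbilinear \<iota> (s n)" "poisson_axioms (ser_bracket s)"
  shows "bracket_derivation s (ham_sop s H)"
  unfolding bracket_derivation_def sop_apply_ham_sop
  using poisson_axioms_inner_derivation[OF assms(2) filtered_bilinearD(2)[OF filtered_bilinear_ser_bracket[OF assms(1)]]]
  by blast

lemma sop_exp_ham_sop_ser_bracket:
  assumes "alg_struct \<iota>" "\<forall>n. kbilinear \<iota> (s n)" "poisson_axioms (ser_bracket s)" "H $ 0 = 0"
  shows "sop_exp \<iota> (ham_sop s H) (ser_bracket s f g)
    = ser_bracket s (sop_exp \<iota> (ham_sop s H) f) (sop_exp \<iota> (ham_sop s H) g)"
  using ham_sop_bracket_derivation[OF assms(2,3)]
  by (intro sop_exp_preserves_filtered_bilinear[OF assms(1)] filtered_bilinear_ser_bracket[OF assms(2)]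
      lambda_der_imp_lambda_additive[OF ham_sop_lambda_der[OF assms(2-4)]])
    (simp add: bracket_derivation_def)

lemma ham_sop_eq_upto: "\<forall>i\<le>k. H' $ i = H $ i \<Longrightarrow> \<forall>n\<le>k. ham_sop s H' n = ham_sop s H n"
  by (auto simp: ham_sop_def fun_eq_iff intro!: sum.cong)

lemma ham_sop_add_monomial:
  assumes "\<forall>n. kbilinear \<iota> (s n)"
  shows "ham_sop s (H + fps_const h * fps_X ^ k) k x = ham_sop s H k x + s 0 h x"
proof -
  have "ham_sop s (H + fps_const h * fps_X ^ k) k x - ham_sop s H k x
      = (\<Sum>i\<le>k. if i = 0 then s 0 h x else 0)"
    unfolding ham_sop_def sum_subtractf[symmetric]
    by (intro sum.cong refl) (auto simp: kbilinear_rules[OF assms[rule_format]])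
  then show ?thesis
    by (simp add: algebra_simps)
qed

section \<open>Unipotent homomorphisms and their first-order defect\<close>

lemma mult_nth_Suc_diff:
  fixes U :: "'a::comm_ring_1 fps"
  assumes "\<forall>i\<le>k. U $ i = U' $ i" "\<forall>i\<le>k. W $ i = W' $ i"
  shows "(U * W) $ Suc k - (U' * W') $ Suc k = (U $ Suc k - U' $ Suc k) * W $ 0 + U $ 0 * (W $ Suc k - W' $ Suc k)"
proof -
  have "vanishes_below (U - U') (Suc k)" "vanishes_below (W - W') (Suc k)"
    using assms by (simp_all add: vanishes_below_diff_iff)
  moreover have "U * W - U' * W' = (U - U') * W + U' * (W - W')"
    by (rule filtered_bilinear_diff[OF filtered_bilinear_times])
  then have "(U * W) $ Suc k - (U' * W') $ Suc k = ((U - U') * W) $ Suc k + (U' * (W - W')) $ Suc k"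
    by (metis fps_add_nth fps_sub_nth)
  ultimately show ?thesis
    using assms by (simp add: mult_nth_vanishes_below_left mult_nth_vanishes_below_right)
qed

lemma ser_bracket_nth_Suc_diff:
  assumes kb: "\<forall>n. kbilinear \<iota> (s n)" and "\<forall>i\<le>k. U $ i = U' $ i" "\<forall>i\<le>k. W $ i = W' $ i"
  shows "ser_bracket s U W $ Suc k - ser_bracket s U' W' $ Suc k
    = s 0 (U $ Suc k - U' $ Suc k) (W $ 0) + s 0 (U $ 0) (W $ Suc k - W' $ Suc k)"
proof -
  have "vanishes_below (U - U') (Suc k)" "vanishes_below (W - W') (Suc k)"
    using assms by (simp_all add: vanishes_below_diff_iff)
  moreover have "ser_bracket s U W - ser_bracket s U' W' = ser_bracket s (U - U') W + ser_bracket s U' (W - W')"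
    by (rule filtered_bilinear_diff[OF filtered_bilinear_ser_bracket[OF kb]])
  then have "ser_bracket s U W $ Suc k - ser_bracket s U' W' $ Suc k
      = ser_bracket s (U - U') W $ Suc k + ser_bracket s U' (W - W') $ Suc k"
    by (metis fps_add_nth fps_sub_nth)
  ultimately show ?thesis
    using assms by (simp add: ser_bracket_nth_vanishes_below_left[OF kb] ser_bracket_nth_vanishes_below_right[OF kb])
qed

definition unipotent_hom :: "('k::field \<Rightarrow> 'b::comm_ring_1) \<Rightarrow> ('b fps \<Rightarrow> 'b fps) \<Rightarrow> bool" where
  "unipotent_hom \<iota> T \<longleftrightarrow> additive T \<and> (\<forall>f. T (fps_X * f) = fps_X * T f) \<and>
     (\<forall>f g. T (f * g) = T f * T g) \<and>
     (\<forall>c f. T (fps_const (\<iota> c) * f) = fps_const (\<iota> c) * T f) \<and>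
     (\<forall>f n. vanishes_below f n \<longrightarrow> vanishes_below (T f - f) (Suc n))"

lemma unipotent_homD:
  assumes "unipotent_hom \<iota> T"
  shows "additive T" "T (fps_X * f) = fps_X * T f" "T (f * g) = T f * T g"
    "T (fps_const (\<iota> c) * f) = fps_const (\<iota> c) * T f"
    "vanishes_below f n \<Longrightarrow> vanishes_below (T f - f) (Suc n)"
  using assms unfolding unipotent_hom_def by blast+

lemma unipotent_hom_sop_exp:
  assumes "alg_struct \<iota>" "lambda_der \<iota> D"
  shows "unipotent_hom \<iota> (sop_exp \<iota> D)"
proof -
  note D = lambda_der_imp_lambda_additive[OF assms(2)]
  show ?thesis
    unfolding unipotent_hom_def
  proof (intro conjI allI impI)
    show "additive (sop_exp \<iota> D)"
      by (rule sop_exp_additive[OF D])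
    show "sop_exp \<iota> D (fps_X * f) = fps_X * sop_exp \<iota> D f" for f
      by (rule sop_exp_fps_X_mult[OF D])
    show "sop_exp \<iota> D (f * g) = sop_exp \<iota> D f * sop_exp \<iota> D g" for f g
      by (rule sop_exp_mult[OF assms])
    show "sop_exp \<iota> D (fps_const (\<iota> c) * f) = fps_const (\<iota> c) * sop_exp \<iota> D f" for c f
      by (rule sop_exp_const_mult) (rule lambda_der_klinear[OF assms(2)])
    show "vanishes_below (sop_exp \<iota> D f - f) (Suc n)" if "vanishes_below f n" for f n
      by (rule sop_exp_unipotent[OF assms(1) D that])
  qed
qed

lemma unipotent_hom_vanishes_below:
  assumes "unipotent_hom \<iota> T" "vanishes_below f n"
  shows "vanishes_below (T f) n"
proof -
  have "vanishes_below (T f - f + f) n"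
    using unipotent_homD(5)[OF assms] assms(2) by (blast intro: vanishes_below_add vanishes_below_mono le_SucI)
  then show ?thesis by simp
qed

lemma unipotent_hom_nth_eq:
  assumes "unipotent_hom \<iota> T" "vanishes_below f n" "j \<le> n"
  shows "T f $ j = f $ j"
  using unipotent_homD(5)[OF assms(1,2)] assms(3) by (simp add: vanishes_below_diff_iff)

lemma unipotent_hom_nth_0: "unipotent_hom \<iota> T \<Longrightarrow> T f $ 0 = f $ 0"
  using unipotent_hom_nth_eq[of \<iota> T f 0 0] by simp

lemma unipotent_hom_comp:
  assumes "unipotent_hom \<iota> T" "unipotent_hom \<iota> S"
  shows "unipotent_hom \<iota> (T \<circ> S)"
proof -
  have "vanishes_below ((T \<circ> S) f - f) (Suc n)" if "vanishes_below f n" for f n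
  proof -
    have "vanishes_below ((T (S f) - S f) + (S f - f)) (Suc n)"
      using unipotent_homD(5)[OF assms(1) unipotent_hom_vanishes_below[OF assms(2) that]]
        unipotent_homD(5)[OF assms(2) that] by (rule vanishes_below_add)
    then show ?thesis
      by simp
  qed
  then show ?thesis
    unfolding unipotent_hom_def
    using additive_comp[OF unipotent_homD(1)[OF assms(1)] unipotent_homD(1)[OF assms(2)]]
      unipotent_homD(2-4)[OF assms(1)] unipotent_homD(2-4)[OF assms(2)]
    by simp
qed

lemma unipotent_hom_defect:
  assumes S: "unipotent_hom \<iota> S" and T: "unipotent_hom \<iota> T" and agree: "\<forall>f. \<forall>j\<le>k. S f $ j = T f $ j"
  obtains R where "is_derivation \<iota> R" and "\<And>f. S f $ Suc k - T f $ Suc k = R (f $ 0)"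
proof
  define R where "R b = S (fps_const b) $ Suc k - T (fps_const b) $ Suc k" for b
  show "S f $ Suc k - T f $ Suc k = R (f $ 0)" for f
  proof -
    define h where "h = Abs_fps (\<lambda>n. f $ Suc n)"
    have f: "f = fps_const (f $ 0) + fps_X * h"
      by (simp add: h_def fps_eq_iff split: nat.split)
    have "U f $ Suc k = U (fps_const (f $ 0)) $ Suc k + U h $ k" if "unipotent_hom \<iota> U" for U
      using additive.add[OF unipotent_homD(1)[OF that]] unipotent_homD(2)[OF that]
      by (subst f) (simp add: fps_X_mult_nth)
    then show ?thesis
      using S T agree by (simp add: R_def)
  qed
  have leibniz: "R (x * y) = x * R y + R x * y" for x y
    using mult_nth_Suc_diff[of k "S (fps_const x)" "T (fps_const x)" "S (fps_const y)" "T (fps_const y)"] agree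
    by (simp add: R_def unipotent_hom_nth_0[OF S] algebra_simps flip: unipotent_homD(3)[OF S] unipotent_homD(3)[OF T])
  show "is_derivation \<iota> R"
    unfolding is_derivation_def klinear_def
  proof (intro conjI allI)
    fix x y c
    show "R (x + y) = R x + R y"
      using additive.add[OF unipotent_homD(1)[OF S]] additive.add[OF unipotent_homD(1)[OF T]]
      by (simp add: R_def flip: fps_const_add)
    show "R (x * y) = x * R y + R x * y"
      by (rule leibniz)
    show "R (\<iota> c * x) = \<iota> c * R x"
      using unipotent_homD(4)[OF S] unipotent_homD(4)[OF T]
      by (simp add: R_def algebra_simps flip: fps_const_mult)
  qed
qed

lemma sop_exp_comp_perturb:
  assumes \<iota>: "alg_struct \<iota>" and A: "lambda_der \<iota> A" "lambda_der \<iota> A'" and B: "lambda_der \<iota> B"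
    and C: "lambda_der \<iota> C" "lambda_der \<iota> C'" and agree: "\<forall>i\<le>k. A' i = A i" "\<forall>i\<le>k. C' i = C i"
  defines "T \<equiv> sop_exp \<iota> A \<circ> sop_exp \<iota> B \<circ> sop_exp \<iota> C"
    and "T' \<equiv> sop_exp \<iota> A' \<circ> sop_exp \<iota> B \<circ> sop_exp \<iota> C'"
  shows "\<forall>j\<le>k. T' f $ j = T f $ j"
    and "T' f $ Suc k = T f $ Suc k + (A' (Suc k) (f $ 0) - A (Suc k) (f $ 0)) + (C' (Suc k) (f $ 0) - C (Suc k) (f $ 0))"
proof -
  note unip = unipotent_hom_sop_exp[OF \<iota>]
  note pert = sop_exp_perturb[OF \<iota> lambda_der_imp_lambda_additive lambda_der_imp_lambda_additive]
  define g where "g = sop_exp \<iota> B (sop_exp \<iota> C' f)"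
  define \<delta> where "\<delta> = sop_exp \<iota> C' f - sop_exp \<iota> C f"
  have AB: "unipotent_hom \<iota> (sop_exp \<iota> A \<circ> sop_exp \<iota> B)"
    by (intro unipotent_hom_comp unip A B)
  have T'T: "T' f - T f = (sop_exp \<iota> A' g - sop_exp \<iota> A g) + (sop_exp \<iota> A \<circ> sop_exp \<iota> B) \<delta>"
    using additive.diff[OF unipotent_homD(1)[OF AB]] by (simp add: T_def T'_def g_def \<delta>_def)
  note pA = pert[OF A agree(1), of g] and pC = pert[OF C agree(2), of f]
  have "vanishes_below \<delta> (Suc k)"
    using pC(1) by (auto simp: vanishes_below_def \<delta>_def)
  then have AB\<delta>: "(sop_exp \<iota> A \<circ> sop_exp \<iota> B) \<delta> $ j = \<delta> $ j" if "j \<le> Suc k" for j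
    using unipotent_hom_nth_eq[OF AB _ that] by blast
  have "g $ 0 = f $ 0"
    using unipotent_hom_nth_0[OF unip[OF B]] unipotent_hom_nth_0[OF unip[OF C(2)]] by (simp add: g_def)
  then have "(T' f - T f) $ Suc k = (A' (Suc k) (f $ 0) - A (Suc k) (f $ 0)) + (C' (Suc k) (f $ 0) - C (Suc k) (f $ 0))"
    unfolding T'T using pA(2) AB\<delta>[of "Suc k"] pC(2) by (simp add: \<delta>_def)
  then show "T' f $ Suc k = T f $ Suc k + (A' (Suc k) (f $ 0) - A (Suc k) (f $ 0)) + (C' (Suc k) (f $ 0) - C (Suc k) (f $ 0))"
    by (simp add: algebra_simps)
  show "\<forall>j\<le>k. T' f $ j = T f $ j"
  proof (intro allI impI)
    fix j assume "j \<le> k"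
    then have "(T' f - T f) $ j = 0"
      unfolding T'T using pA(1) AB\<delta>[of j] pC(1) by (simp add: \<delta>_def)
    then show "T' f $ j = T f $ j"
      by simp
  qed
qed

section \<open>Order-by-order comparison of two solutions\<close>

locale two_solutions =
  fixes \<iota>A :: "'k::field_char_0 \<Rightarrow> 'a::comm_ring_1"
    and \<iota>B :: "'k \<Rightarrow> 'b::comm_ring_1"
    and pi0 :: "'a \<Rightarrow> 'a \<Rightarrow> 'a" and sigma0 :: "'b \<Rightarrow> 'b \<Rightarrow> 'b"
    and \<phi>0 :: "'a \<Rightarrow> 'b"
    and pi :: "nat \<Rightarrow> 'a \<Rightarrow> 'a \<Rightarrow> 'a" and sigma :: "nat \<Rightarrow> 'b \<Rightarrow> 'b \<Rightarrow> 'b"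
    and X Xb :: "nat \<Rightarrow> 'b \<Rightarrow> 'b"
  assumes alg_B: "alg_struct \<iota>B"
    and sigma0_bracket: "poisson_bracket \<iota>B sigma0"
    and phi0_morphism: "poisson_morphism \<iota>A \<iota>B pi0 sigma0 \<phi>0"
    and pi_deformation: "formal_poisson_deformation \<iota>A pi0 pi"
    and sigma_deformation: "formal_poisson_deformation \<iota>B sigma0 sigma"
    and H1_trivial: "H1_CE_der_trivial \<iota>A \<iota>B pi0 sigma0 \<phi>0"
    and X_solution: "is_solution \<iota>B pi sigma \<phi>0 X"
    and Xb_solution: "is_solution \<iota>B pi sigma \<phi>0 Xb"
begin

lemma sigma_kbilinear: "\<forall>n. kbilinear \<iota>B (sigma n)"
  and sigma_poisson: "poisson_axioms (ser_bracket sigma)"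
  and sigma_0: "sigma 0 = sigma0"
  and pi_0: "pi 0 = pi0"
  using sigma_deformation pi_deformation by (simp_all add: formal_poisson_deformation_def)

lemma sigma0_kbilinear: "kbilinear \<iota>B sigma0"
  using sigma0_bracket by (simp add: poisson_bracket_def)

lemma sigma0_antisym: "sigma0 x y = - sigma0 y x"
  using sigma0_bracket poisson_axiomsD(1) by (auto simp: poisson_bracket_def)

lemma X_lambda_der: "lambda_der \<iota>B X"
  and Xb_lambda_der: "lambda_der \<iota>B Xb"
  using X_solution Xb_solution by (simp_all add: is_solution_def)

lemma solution_bracket:
  assumes "is_solution \<iota>B pi sigma \<phi>0 Y"
  shows "sop_exp \<iota>B Y (ser_ext \<phi>0 (ser_bracket pi u v))
    = ser_bracket sigma (sop_exp \<iota>B Y (ser_ext \<phi>0 u)) (sop_exp \<iota>B Y (ser_ext \<phi>0 v))"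
  using assms by (simp add: is_solution_def ser_poisson_morphism_def)

definition twist :: "'b fps \<Rightarrow> (nat \<Rightarrow> 'b \<Rightarrow> 'b) \<Rightarrow> 'b fps \<Rightarrow> 'b fps" where
  "twist H V = sop_exp \<iota>B (ham_sop sigma H) \<circ> sop_exp \<iota>B X \<circ> sop_exp \<iota>B V"

lemma twist_unipotent: "H $ 0 = 0 \<Longrightarrow> lambda_der \<iota>B V \<Longrightarrow> unipotent_hom \<iota>B (twist H V)"
  unfolding twist_def
  by (intro unipotent_hom_comp unipotent_hom_sop_exp alg_B X_lambda_der
      ham_sop_lambda_der[OF sigma_kbilinear sigma_poisson])

lemma twist_bracket:
  assumes "H $ 0 = 0" "lambda_der \<iota>B V" "vertical \<phi>0 V"
  shows "twist H V (ser_ext \<phi>0 (ser_bracket pi u v))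
    = ser_bracket sigma (twist H V (ser_ext \<phi>0 u)) (twist H V (ser_ext \<phi>0 v))"
  by (simp add: twist_def sop_exp_vertical[OF alg_B lambda_der_imp_lambda_additive[OF assms(2)] assms(3)]
      solution_bracket[OF X_solution] sop_exp_ham_sop_ser_bracket[OF alg_B sigma_kbilinear sigma_poisson assms(1)])

definition approximates :: "nat \<Rightarrow> 'b fps \<Rightarrow> (nat \<Rightarrow> 'b \<Rightarrow> 'b) \<Rightarrow> bool" where
  "approximates k H V \<longleftrightarrow> H $ 0 = 0 \<and> lambda_der \<iota>B V \<and> vertical \<phi>0 V \<and>
     (\<forall>f. \<forall>j\<le>k. sop_exp \<iota>B Xb f $ j = twist H V f $ j)"

lemma approximates_0: "approximates 0 0 (\<lambda>_ _. 0)"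
proof -
  have V: "lambda_der \<iota>B (\<lambda>_ _. 0)"
    by (simp add: lambda_der_def is_derivation_def klinear_def)
  then show ?thesis
    using unipotent_hom_nth_0[OF unipotent_hom_sop_exp[OF alg_B Xb_lambda_der]]
      unipotent_hom_nth_0[OF twist_unipotent[OF _ V]]
    by (simp add: approximates_def vertical_def)
qed

lemma twist_perturb:
  assumes H: "H $ 0 = 0" "H' $ 0 = 0" and V: "lambda_der \<iota>B V" "lambda_der \<iota>B V'"
    and agree: "\<forall>i\<le>k. H' $ i = H $ i" "\<forall>i\<le>k. V' i = V i"
  shows "\<forall>j\<le>k. twist H' V' f $ j = twist H V f $ j"
    and "twist H' V' f $ Suc k = twist H V f $ Suc k
      + (ham_sop sigma H' (Suc k) (f $ 0) - ham_sop sigma H (Suc k) (f $ 0)) + (V' (Suc k) (f $ 0) - V (Suc k) (f $ 0))"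
  using sop_exp_comp_perturb[OF alg_B ham_sop_lambda_der[OF sigma_kbilinear sigma_poisson H(1)]
      ham_sop_lambda_der[OF sigma_kbilinear sigma_poisson H(2)] X_lambda_der V ham_sop_eq_upto[OF agree(1)]
      agree(2), folded twist_def]
  by blast+

lemma defect_bracket:
  assumes approx: "approximates k H V"
    and R: "\<And>f. sop_exp \<iota>B Xb f $ Suc k - twist H V f $ Suc k = R (f $ 0)"
  shows "R (\<phi>0 (pi0 a a')) = sigma0 (R (\<phi>0 a)) (\<phi>0 a') + sigma0 (\<phi>0 a) (R (\<phi>0 a'))"
proof -
  have H0: "H $ 0 = 0" and V: "lambda_der \<iota>B V" and vert: "vertical \<phi>0 V"
    and agree: "\<forall>f. \<forall>j\<le>k. sop_exp \<iota>B Xb f $ j = twist H V f $ j"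
    using approx by (simp_all add: approximates_def)
  define u where "u = ser_ext \<phi>0 (fps_const a)"
  define v where "v = ser_ext \<phi>0 (fps_const a')"
  define w where "w = ser_ext \<phi>0 (ser_bracket pi (fps_const a) (fps_const a'))"
  have "w $ 0 = \<phi>0 (pi0 a a')" "u $ 0 = \<phi>0 a" "v $ 0 = \<phi>0 a'"
    by (simp_all add: w_def u_def v_def ser_ext_nth ser_bracket_nth pi_0)
  then have "R (\<phi>0 (pi0 a a')) = sop_exp \<iota>B Xb w $ Suc k - twist H V w $ Suc k"
    by (simp add: R)
  also have "\<dots> = ser_bracket sigma (sop_exp \<iota>B Xb u) (sop_exp \<iota>B Xb v) $ Suc k
      - ser_bracket sigma (twist H V u) (twist H V v) $ Suc k"
    unfolding u_def v_def w_def solution_bracket[OF Xb_solution] twist_bracket[OF H0 V vert] ..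
  also have "\<dots> = sigma 0 (sop_exp \<iota>B Xb u $ Suc k - twist H V u $ Suc k) (sop_exp \<iota>B Xb v $ 0)
      + sigma 0 (sop_exp \<iota>B Xb u $ 0) (sop_exp \<iota>B Xb v $ Suc k - twist H V v $ Suc k)"
    using agree by (intro ser_bracket_nth_Suc_diff[OF sigma_kbilinear]) simp_all
  also have "\<dots> = sigma0 (R (\<phi>0 a)) (\<phi>0 a') + sigma0 (\<phi>0 a) (R (\<phi>0 a'))"
    using \<open>u $ 0 = \<phi>0 a\<close> \<open>v $ 0 = \<phi>0 a'\<close>
    by (simp add: R sigma_0 unipotent_hom_nth_0[OF unipotent_hom_sop_exp[OF alg_B Xb_lambda_der]])
  finally show ?thesis .
qed

lemma defect_cocycle:
  assumes "approximates k H V" and R: "is_derivation \<iota>B R"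
    and "\<And>f. sop_exp \<iota>B Xb f $ Suc k - twist H V f $ Suc k = R (f $ 0)"
  shows "ce_der_cochain1 \<iota>A \<iota>B \<phi>0 (R \<circ> \<phi>0)" and "ce_d1 pi0 sigma0 \<phi>0 (R \<circ> \<phi>0) = (\<lambda>_ _. 0)"
proof -
  have \<phi>: "klinear \<iota>A \<iota>B \<phi>0" "\<phi>0 (x * y) = \<phi>0 x * \<phi>0 y" for x y
    using phi0_morphism by (simp_all add: poisson_morphism_def)
  have "klinear \<iota>A \<iota>B (R \<circ> \<phi>0)"
    using R[unfolded is_derivation_def, THEN conjunct1] \<phi>(1) by (simp add: klinear_def)
  moreover have "(R \<circ> \<phi>0) (a * a') = \<phi>0 a * (R \<circ> \<phi>0) a' + (R \<circ> \<phi>0) a * \<phi>0 a'" for a a'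
    using R \<phi>(2) by (simp add: is_derivation_def)
  ultimately show "ce_der_cochain1 \<iota>A \<iota>B \<phi>0 (R \<circ> \<phi>0)"
    by (simp add: ce_der_cochain1_def)
  show "ce_d1 pi0 sigma0 \<phi>0 (R \<circ> \<phi>0) = (\<lambda>_ _. 0)"
  proof (intro ext)
    fix a0 a1
    show "ce_d1 pi0 sigma0 \<phi>0 (R \<circ> \<phi>0) a0 a1 = 0"
      using sigma0_antisym[of "\<phi>0 a1" "R (\<phi>0 a0)"] defect_bracket[OF assms(1,3)]
      by (simp add: ce_d1_def)
  qed
qed

lemma vertical_correction:
  assumes "lambda_der \<iota>B V" "vertical \<phi>0 V" "is_derivation \<iota>B R" "\<And>a. R (\<phi>0 a) = sigma0 (\<phi>0 a) b"
  shows "lambda_der \<iota>B (V(Suc k := (\<lambda>x. V (Suc k) x + (R x + sigma0 b x))))"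
    and "vertical \<phi>0 (V(Suc k := (\<lambda>x. V (Suc k) x + (R x + sigma0 b x))))"
proof -
  show "lambda_der \<iota>B (V(Suc k := (\<lambda>x. V (Suc k) x + (R x + sigma0 b x))))"
    by (rule lambda_der_fun_upd_add[OF assms(1) is_derivation_add[OF assms(3)
          poisson_bracket_is_derivation[OF sigma0_bracket]]])
  have "(V(Suc k := (\<lambda>x. V (Suc k) x + (R x + sigma0 b x)))) n (\<phi>0 a) = 0" for n a
    using assms(2,4) sigma0_antisym[of "\<phi>0 a" b] by (simp add: vertical_def)
  then show "vertical \<phi>0 (V(Suc k := (\<lambda>x. V (Suc k) x + (R x + sigma0 b x))))"
    by (simp add: vertical_def)
qed

lemma approximates_Suc:
  assumes approx: "approximates k H V"
  shows "\<exists>H' V'. approximates (Suc k) H' V' \<and> (\<forall>i\<le>k. H' $ i = H $ i \<and> V' i = V i)"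
proof -
  have H0: "H $ 0 = 0" and V: "lambda_der \<iota>B V" and vert: "vertical \<phi>0 V"
    and agree: "\<forall>f. \<forall>j\<le>k. sop_exp \<iota>B Xb f $ j = twist H V f $ j"
    using approx by (simp_all add: approximates_def)
  obtain R where R: "is_derivation \<iota>B R"
    and Rf: "\<And>f. sop_exp \<iota>B Xb f $ Suc k - twist H V f $ Suc k = R (f $ 0)"
    using unipotent_hom_defect[OF unipotent_hom_sop_exp[OF alg_B Xb_lambda_der] twist_unipotent[OF H0 V] agree]
    by blast
  obtain b where "R \<circ> \<phi>0 = ce_d0 sigma0 \<phi>0 b"
    using H1_trivial defect_cocycle[OF approx R Rf] unfolding H1_CE_der_trivial_def by blast
  then have R_\<phi>: "R (\<phi>0 a) = sigma0 (\<phi>0 a) b" for a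
    by (simp add: fun_eq_iff ce_d0_def)
  define H' where "H' = H + fps_const (- b) * fps_X ^ Suc k"
  define V' where "V' = V(Suc k := (\<lambda>x. V (Suc k) x + (R x + sigma0 b x)))"
  have H'0: "H' $ 0 = 0"
    using H0 by (simp add: H'_def)
  have V': "lambda_der \<iota>B V'" and "vertical \<phi>0 V'"
    unfolding V'_def using vertical_correction[OF V vert R R_\<phi>] by blast+
  moreover have low: "\<forall>i\<le>k. H' $ i = H $ i \<and> V' i = V i"
    by (auto simp: H'_def V'_def)
  moreover have "sop_exp \<iota>B Xb f $ j = twist H' V' f $ j" if "j \<le> Suc k" for f j
  proof -
    note pert = twist_perturb[OF H0 H'0 V V', of k f]
    have "ham_sop sigma H' (Suc k) x = ham_sop sigma H (Suc k) x - sigma0 b x" for x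
      using ham_sop_add_monomial[OF sigma_kbilinear, of H "- b" "Suc k" x]
        kbilinear_rules(7)[OF sigma0_kbilinear]
      by (simp add: H'_def sigma_0)
    then have "twist H' V' f $ Suc k = twist H V f $ Suc k + R (f $ 0)"
      using pert(2) low by (simp add: V'_def)
    then show ?thesis
      using that agree pert(1) Rf[of f] low
      by (cases "j \<le> k") (auto simp: le_Suc_eq algebra_simps)
  qed
  ultimately show ?thesis
    using H'0 V' unfolding approximates_def by blast
qed

lemma approximating_sequence:
  obtains F where "\<And>k. approximates k (fst (F k)) (snd (F k))"
    and "\<And>i j k. k \<le> j \<Longrightarrow> i \<le> k \<Longrightarrow> fst (F j) $ i = fst (F k) $ i \<and> snd (F j) i = snd (F k) i"
proof -
  have "\<exists>F. \<forall>k. approximates k (fst (F k)) (snd (F k)) \<and>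
      (\<forall>i\<le>k. fst (F (Suc k)) $ i = fst (F k) $ i \<and> snd (F (Suc k)) i = snd (F k) i)"
  proof (rule dependent_nat_choice)
    show "\<exists>x. approximates 0 (fst x) (snd x)"
      using approximates_0 by auto
    show "\<exists>y. approximates (Suc k) (fst y) (snd y) \<and> (\<forall>i\<le>k. fst y $ i = fst x $ i \<and> snd y i = snd x i)"
      if "approximates k (fst x) (snd x)" for x k
      using approximates_Suc[OF that] by auto
  qed
  then obtain F where F: "\<And>k. approximates k (fst (F k)) (snd (F k))"
    and step: "\<And>k. \<forall>i\<le>k. fst (F (Suc k)) $ i = fst (F k) $ i \<and> snd (F (Suc k)) i = snd (F k) i"
    by blast
  have "fst (F j) $ i = fst (F k) $ i \<and> snd (F j) i = snd (F k) i" if "k \<le> j" "i \<le> k" for i j k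
    using that(1) by (induct j rule: dec_induct) (use step that(2) in auto)
  then show ?thesis
    using that F by blast
qed

lemma exp_Xb_eq_twist:
  "\<exists>V H. lambda_der \<iota>B V \<and> vertical \<phi>0 V \<and> H $ 0 = 0 \<and> sop_exp \<iota>B Xb = twist H V"
proof -
  obtain F where F: "\<And>k. approximates k (fst (F k)) (snd (F k))"
    and stable: "\<And>i j k. k \<le> j \<Longrightarrow> i \<le> k \<Longrightarrow> fst (F j) $ i = fst (F k) $ i \<and> snd (F j) i = snd (F k) i"
    using approximating_sequence by blast
  define H where "H = Abs_fps (\<lambda>i. fst (F i) $ i)"
  define V where "V i = snd (F i) i" for i
  have H_k: "\<forall>i\<le>k. H $ i = fst (F k) $ i" and V_k: "\<forall>i\<le>k. V i = snd (F k) i" for k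
    using stable by (simp_all add: H_def V_def)
  have H0: "H $ 0 = 0"
    using H_k[of 0] F[of 0] by (simp add: approximates_def)
  have V: "lambda_der \<iota>B V" and "vertical \<phi>0 V"
    using F by (auto simp: approximates_def lambda_der_def vertical_def V_def)
  moreover have "sop_exp \<iota>B Xb = twist H V"
  proof (intro ext fps_ext)
    fix f k
    show "sop_exp \<iota>B Xb f $ k = twist H V f $ k"
      using twist_perturb(1)[OF _ H0 _ V H_k V_k, of k f] F[of k] by (simp add: approximates_def)
  qed
  ultimately show ?thesis
    using H0 by blast
qed

end

theorem proposition3p7:
  fixes \<iota>A :: "'k::field_char_0 \<Rightarrow> 'a::comm_ring_1"
    and \<iota>B :: "'k \<Rightarrow> 'b::comm_ring_1"
    and pi0 :: "'a \<Rightarrow> 'a \<Rightarrow> 'a" and sigma0 :: "'b \<Rightarrow> 'b \<Rightarrow> 'b"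
    and \<phi>0 :: "'a \<Rightarrow> 'b"
    and pi :: "nat \<Rightarrow> 'a \<Rightarrow> 'a \<Rightarrow> 'a" and sigma :: "nat \<Rightarrow> 'b \<Rightarrow> 'b \<Rightarrow> 'b"
    and X Xb :: "nat \<Rightarrow> 'b \<Rightarrow> 'b"
  assumes "alg_struct \<iota>A" and "alg_struct \<iota>B"
    and "poisson_bracket \<iota>A pi0" and "poisson_bracket \<iota>B sigma0"
    and "poisson_morphism \<iota>A \<iota>B pi0 sigma0 \<phi>0"
    and "formal_poisson_deformation \<iota>A pi0 pi"
    and "formal_poisson_deformation \<iota>B sigma0 sigma"
    and "H1_CE_der_trivial \<iota>A \<iota>B pi0 sigma0 \<phi>0"
    and "is_solution \<iota>B pi sigma \<phi>0 X"
    and "is_solution \<iota>B pi sigma \<phi>0 Xb"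
  shows "(\<exists>V H. lambda_der \<iota>B V \<and> vertical \<phi>0 V \<and> fps_nth H 0 = 0 \<and>
            sop_exp \<iota>B Xb = sop_exp \<iota>B (ham_sop sigma H) \<circ> sop_exp \<iota>B X \<circ> sop_exp \<iota>B V)
         \<and> equivalent_solutions \<iota>B sigma \<phi>0 X Xb"
proof -
  interpret two_solutions \<iota>A \<iota>B pi0 sigma0 \<phi>0 pi sigma X Xb
    by unfold_locales (fact assms)+
  obtain V H where VH: "lambda_der \<iota>B V" "vertical \<phi>0 V" "H $ 0 = 0"
    "sop_exp \<iota>B Xb = sop_exp \<iota>B (ham_sop sigma H) \<circ> sop_exp \<iota>B X \<circ> sop_exp \<iota>B V"
    using exp_Xb_eq_twist unfolding twist_def by blast
  moreover have "equivalent_solutions \<iota>B sigma \<phi>0 X Xb"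
    unfolding equivalent_solutions_def
    using VH ham_sop_lambda_der[OF sigma_kbilinear sigma_poisson VH(3)]
      ham_sop_bracket_derivation[OF sigma_kbilinear sigma_poisson] by blast
  ultimately show ?thesis
    by blast
qed

end
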